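(* (1) Let $p\ge 1$ be an integer and $\delta>0$. There exists $\epsilon>0$, depending only on $\delta$ and $p$, such that every flag $(d-1)$-dimensional simplicial complex $\Gamma$ with $n$ vertices satisfying $\mathrm{gr}_{p-1}(\Gamma)>2p$ and $d<(1-\delta)n$ has $f_1(\Gamma)<\binom{n}{2}-\epsilon n^2$. (2) For every $\epsilon'>0$ there exists $\delta'>0$ such that every $(d-1)$-dimensional simplicial complex $\Gamma$ with $n$ vertices satisfying $\mathrm{gr}_1(\Gamma)>4$ and $d<\delta' n$ has $f_1(\Gamma)<\epsilon' n^2$.
   Context: A simplicial complex $\Gamma$ on a finite vertex set $V=V(\Gamma)$ is a family of subsets of $V$ (faces) closed under taking subsets; its dimension is $\max\{|F|:F\in\Gamma\}-1$; $f_1(\Gamma)$ is the number of 2-element faces (edges). $\Gamma$ is flag if every vertex set all of whose 2-element subsets are faces is itself a face. For $W\subseteq V$, $\Gamma[W]=\{F\in\Gamma:F\subseteq W\}$. For a face $F$ (possibly empty), $\mathrm{lk}_\Gamma(F)=\{G\setminus F: F\subseteq G\in\Gamma\}$. Fix a field $\mathbf{k}$; $\tilde H_i(\cdot;\mathbf{k})$ is reduced simplicial homology. The $(p-1)$-girth is $\mathrm{gr}_{p-1}(\Gamma)=\min\{|W|: W\subseteq V(\Gamma),\ \tilde H_{p-1}(\mathrm{lk}_\Gamma(F)[W];\mathbf{k})\neq 0 \text{ for some face } F\in\Gamma \text{ (including } F=\emptyset)\}$, or $\infty$ if none exists. *)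

theory Defs
  imports Complex_Main "HOL-Library.Extended_Nat"
begin

definition simplicial_complex :: "nat set set \<Rightarrow> bool" where
  "simplicial_complex K \<longleftrightarrow> finite K \<and> K \<noteq> {} \<and> (\<forall>F\<in>K. \<forall>G. G \<subseteq> F \<longrightarrow> G \<in> K)"

definition verts :: "nat set set \<Rightarrow> nat set" where
  "verts K = \<Union>K"

text \<open>d = max face cardinality, so the complex has dimension d - 1.\<close>
definition cdim :: "nat set set \<Rightarrow> nat" where
  "cdim K = Max (card ` K)"

definition f1 :: "nat set set \<Rightarrow> nat" where
  "f1 K = card {F \<in> K. card F = 2}"

definition flag :: "nat set set \<Rightarrow> bool" where
  "flag K \<longleftrightarrow> (\<forall>W. W \<subseteq> verts K \<longrightarrow>
      (\<forall>u\<in>W. \<forall>v\<in>W. u \<noteq> v \<longrightarrow> {u, v} \<in> K) \<longrightarrow> W \<in> K)"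

definition induced :: "nat set set \<Rightarrow> nat set \<Rightarrow> nat set set" where
  "induced K W = {F \<in> K. F \<subseteq> W}"

definition link :: "nat set set \<Rightarrow> nat set \<Rightarrow> nat set set" where
  "link K F = {G - F | G. G \<in> K \<and> F \<subseteq> G}"

text \<open>A chain of degree i is supported on faces with i+1 vertices (the empty face has
  degree -1, giving the augmented = reduced chain complex). Faces are oriented by
  the natural order on vertices: the boundary of [v_0,...,v_i] is
  sum_j (-1)^j [v_0,..,v_j omitted,..,v_i].\<close>

definition chain :: "nat set set \<Rightarrow> nat \<Rightarrow> (nat set \<Rightarrow> 'k::field) \<Rightarrow> bool" where
  "chain K i c \<longleftrightarrow> (\<forall>F. c F \<noteq> 0 \<longrightarrow> F \<in> K \<and> card F = Suc i)"

definition bd :: "nat set set \<Rightarrow> (nat set \<Rightarrow> 'k::field) \<Rightarrow> nat set \<Rightarrow> 'k" where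
  "bd K c G = (\<Sum>v \<in> verts K - G.
      if insert v G \<in> K then (-1) ^ card {u \<in> G. u < v} * c (insert v G) else 0)"

definition homology_nonzero :: "'k::field itself \<Rightarrow> nat set set \<Rightarrow> nat \<Rightarrow> bool" where
  "homology_nonzero _ K i \<longleftrightarrow>
     (\<exists>c :: nat set \<Rightarrow> 'k. chain K i c \<and> bd K c = (\<lambda>_. 0) \<and>
        \<not> (\<exists>b :: nat set \<Rightarrow> 'k. chain K (Suc i) b \<and> bd K b = c))"

text \<open>The i-girth (here i = p - 1), infinity if no witness exists.\<close>
definition girth :: "'k::field itself \<Rightarrow> nat set set \<Rightarrow> nat \<Rightarrow> enat" where
  "girth k K i = Inf ((\<lambda>W. enat (card W)) `
      {W. W \<subseteq> verts K \<and> (\<exists>F\<in>K. homology_nonzero k (induced (link K F) W) i)})"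

end

theory Submission
  imports Defs
begin

text \<open>
  Both parts of the theorem reduce homology to graph theory.  Write \<open>N\<close> for the graph of
  non-edges of the 1-skeleton of \<open>\<Gamma>\<close> and \<open>d\<close> for the maximal face size.  In a flag complex an
  induced matching of size \<open>p\<close> in \<open>N\<close> spans the boundary of a \<open>p\<close>-dimensional cross-polytope,
  which has nonzero homology in degree \<open>p - 1\<close> on \<open>2p\<close> vertices; so \<open>gr(p-1) > 2p\<close> forbids
  such matchings.  Independent sets of \<open>N\<close> are faces, hence have at most \<open>d\<close> vertices.  A
  Ramsey-type counting lemma then shows that \<open>N\<close> has at least \<open>(n - d)\<^sup>2 / 4\<^sup>p\<close> arcs, which
  gives part (1).  For part (2), \<open>gr(1) > 4\<close> forces the complex to be flag (a minimal non-face
  clique would produce a hollow triangle) and to have no induced 4-cycles; then the common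
  neighbourhood of a non-edge is a face, and counting non-edges inside neighbourhoods in two
  ways contradicts the existence of many edges when \<open>d\<close> is small.
\<close>

lemma face_subset: "simplicial_complex K \<Longrightarrow> F \<in> K \<Longrightarrow> G \<subseteq> F \<Longrightarrow> G \<in> K"
  unfolding simplicial_complex_def by blast

lemma empty_face: "simplicial_complex K \<Longrightarrow> {} \<in> K"
  unfolding simplicial_complex_def by blast

lemma finite_face:
  assumes "simplicial_complex K" "F \<in> K"
  shows "finite F"
proof -
  have "Pow F \<subseteq> K" using assms unfolding simplicial_complex_def by blast
  then have "finite (Pow F)" using assms(1) unfolding simplicial_complex_def by (meson finite_subset)
  then show ?thesis by simp
qed

lemma finite_verts: "simplicial_complex K \<Longrightarrow> finite (verts K)"
  unfolding verts_def using finite_face by (metis finite_Union simplicial_complex_def)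

lemma face_subset_verts: "F \<in> K \<Longrightarrow> F \<subseteq> verts K"
  unfolding verts_def by auto

lemma card_face_le_cdim: "simplicial_complex K \<Longrightarrow> F \<in> K \<Longrightarrow> card F \<le> cdim K"
  unfolding cdim_def by (simp add: simplicial_complex_def)

lemma cdim_le_card_verts:
  assumes sc: "simplicial_complex K"
  shows "cdim K \<le> card (verts K)"
proof -
  have "card F \<le> card (verts K)" if "F \<in> K" for F
    using card_mono[OF finite_verts[OF sc] face_subset_verts[OF that]] .
  then show ?thesis unfolding cdim_def using sc by (simp add: simplicial_complex_def)
qed

lemma link_empty: "link K {} = K"
  unfolding link_def by auto

lemma girth_le:
  assumes "W \<subseteq> verts K" "F \<in> K" "homology_nonzero k (induced (link K F) W) i"
  shows "girth k K i \<le> enat (card W)"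
  unfolding girth_def by (rule Inf_lower) (use assms in auto)

lemma flagD:
  assumes "flag K" "C \<subseteq> verts K" "\<And>u v. u \<in> C \<Longrightarrow> v \<in> C \<Longrightarrow> u \<noteq> v \<Longrightarrow> {u,v} \<in> K"
  shows "C \<in> K"
  using assms unfolding flag_def by blast

lemma small_clique_face:
  assumes sc: "simplicial_complex K" and C: "C \<subseteq> verts K" "\<forall>u\<in>C. \<forall>v\<in>C. u \<noteq> v \<longrightarrow> {u,v} \<in> K"
    and small: "card C \<le> 2"
  shows "C \<in> K"
proof -
  have "finite C" using C(1) finite_verts[OF sc] by (rule finite_subset)
  then consider "C = {}" | u where "C = {u}" | u v where "C = {u,v}" "u \<noteq> v"
    using small by (metis card_0_eq card_1_singletonE card_2_iff le_Suc_eq numeral_2_eq_2 One_nat_def le_zero_eq)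
  then show ?thesis
  proof cases
    case 1 then show ?thesis using empty_face[OF sc] by simp
  next
    case (2 u)
    then obtain F where "F \<in> K" "u \<in> F" using C(1) unfolding verts_def by blast
    then show ?thesis using 2 face_subset[OF sc] by blast
  next
    case (3 u v) then show ?thesis using C(2) by auto
  qed
qed

text \<open>A nonzero cycle in the top degree of a complex cannot be a boundary, because there are
  no chains one degree higher.  Both homology computations below rest on this.\<close>
lemma homology_nonzero_top_cycle:
  fixes c :: "nat set \<Rightarrow> 'k::field"
  assumes chain: "chain K i c" and cycle: "bd K c = (\<lambda>_. 0)" and nonzero: "c F \<noteq> 0"
    and top: "\<And>G. G \<in> K \<Longrightarrow> card G \<le> Suc i"
  shows "homology_nonzero TYPE('k) K i"
  unfolding homology_nonzero_def
proof (intro exI conjI notI)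
  show "chain K i c" "bd K c = (\<lambda>_. 0)" by fact+
  assume "\<exists>b :: nat set \<Rightarrow> 'k. chain K (Suc i) b \<and> bd K b = c"
  then obtain b :: "nat set \<Rightarrow> 'k" where b: "chain K (Suc i) b" "bd K b = c" by blast
  have b_zero: "b G = 0" for G
    using b(1) top[of G] unfolding chain_def by fastforce
  have "bd K b = (\<lambda>_. 0)" unfolding bd_def by (auto intro!: ext sum.neutral simp: b_zero)
  with b(2) have "c = (\<lambda>_. 0)" by simp
  with nonzero show False by simp
qed

locale sorted_triple =
  fixes x y z :: nat
  assumes xy: "x < y" and yz: "y < z"
begin

definition hollow :: "nat set set" where
  "hollow = {T. T \<subseteq> {x,y,z} \<and> T \<noteq> {x,y,z}}"

definition cycle :: "nat set \<Rightarrow> 'k::field" where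
  "cycle T = (if T = {x,y} \<or> T = {y,z} then 1 else if T = {x,z} then -1 else 0)"

lemma edges_hollow: "{x,y} \<in> hollow" "{y,z} \<in> hollow" "{x,z} \<in> hollow"
proof -
  have "z \<notin> {x,y}" "x \<notin> {y,z}" "y \<notin> {x,z}" using xy yz by auto
  then show "{x,y} \<in> hollow" "{y,z} \<in> hollow" "{x,z} \<in> hollow" unfolding hollow_def by blast+
qed

lemma verts_hollow: "verts hollow = {x,y,z}"
  using edges_hollow unfolding verts_def hollow_def by blast

lemma cycle_support: "cycle T \<noteq> 0 \<Longrightarrow> T = {x,y} \<or> T = {y,z} \<or> T = {x,z}"
  by (auto simp: cycle_def split: if_splits)

lemma cycle_values: "cycle {x,y} = 1" "cycle {y,z} = 1" "cycle {x,z} = -1"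
  using xy yz by (auto simp: cycle_def doubleton_eq_iff)

lemma chain_cycle: "chain hollow 1 cycle"
  unfolding chain_def using edges_hollow xy yz by (auto dest!: cycle_support)

lemma card_hollow_le: "T \<in> hollow \<Longrightarrow> card T \<le> 2"
proof -
  assume "T \<in> hollow"
  then have "T \<subset> {x,y,z}" by (auto simp: hollow_def)
  moreover have "card {x,y,z} = 3" using xy yz by auto
  ultimately show ?thesis using psubset_card_mono[of "{x,y,z}" T] by auto
qed

text \<open>Only the singletons have nonzero boundary coefficients, and there the two
  adjacent edges cancel.\<close>
lemma bd_cycle: "bd hollow (cycle :: nat set \<Rightarrow> 'k::field) G = 0"
proof -
  have bd_G: "bd hollow (cycle :: nat set \<Rightarrow> 'k) G
      = (\<Sum>v \<in> {x,y,z} - G. (-1) ^ card {u \<in> G. u < v} * cycle (insert v G))"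
    unfolding bd_def verts_hollow
    by (rule sum.cong) (use chain_cycle in \<open>auto simp: chain_def\<close>)
  consider "G = {x}" | "G = {y}" | "G = {z}" | "G \<notin> {{x},{y},{z}}" by blast
  then show ?thesis
  proof cases
    case 1
    have "{x,y,z} - G = {y,z}" "{u \<in> G. u < y} = {x}" "{u \<in> G. u < z} = {x}"
      "insert y G = {x,y}" "insert z G = {x,z}" using 1 xy yz by auto
    note G_facts = this
    show ?thesis unfolding bd_G G_facts using yz by (simp add: cycle_values G_facts)
  next
    case 2
    have "{x,y,z} - G = {x,z}" "{u \<in> G. u < x} = {}" "{u \<in> G. u < z} = {y}"
      "insert x G = {x,y}" "insert z G = {y,z}" using 2 xy yz by auto
    note G_facts = this
    show ?thesis unfolding bd_G G_facts using xy yz by (simp add: cycle_values G_facts)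
  next
    case 3
    have "{x,y,z} - G = {x,y}" "{u \<in> G. u < x} = {}" "{u \<in> G. u < y} = {}"
      "insert x G = {x,z}" "insert y G = {y,z}" using 3 xy yz by auto
    note G_facts = this
    show ?thesis unfolding bd_G G_facts using xy by (simp add: cycle_values G_facts insert_commute)
  next
    case 4
    have "(cycle (insert v G) :: 'k) = 0" if "v \<notin> G" for v
    proof (rule ccontr)
      assume "(cycle (insert v G) :: 'k) \<noteq> 0"
      then have "insert v G = {x,y} \<or> insert v G = {y,z} \<or> insert v G = {x,z}" by (rule cycle_support)
      then obtain s t where st: "insert v G = {s,t}" "s \<in> {x,y,z}" "t \<in> {x,y,z}" "s \<noteq> t"
        using less_imp_neq[OF xy] less_imp_neq[OF yz] less_imp_neq[OF less_trans[OF xy yz]] by blast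
      then have "G = {s,t} - {v}" "v = s \<or> v = t" using that by auto
      then have "G = {t} \<or> G = {s}" using st(4) by auto
      then have "G \<in> {{x},{y},{z}}" using st(2,3) by auto
      with 4 show False by blast
    qed
    then show ?thesis unfolding bd_G by simp
  qed
qed

lemma homology_nonzero_hollow: "homology_nonzero TYPE('k::field) hollow 1"
proof (rule homology_nonzero_top_cycle[OF chain_cycle])
  show "bd hollow (cycle :: nat set \<Rightarrow> 'k) = (\<lambda>_. 0)" using bd_cycle by auto
  show "card T \<le> Suc 1" if "T \<in> hollow" for T using card_hollow_le[OF that] by simp
  show "(cycle {x,y} :: 'k) \<noteq> 0" by (simp add: cycle_values)
qed

end

lemma card_3_sorted:
  fixes T :: "nat set"
  assumes "card T = 3"
  obtains x y z where "T = {x,y,z}" "x < y" "y < z"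
proof -
  define xs where "xs = sorted_list_of_set T"
  have "finite T" using assms by (metis card.infinite zero_neq_numeral)
  then have T: "set xs = T" "sorted_wrt (<) xs" "length xs = 3"
    using assms by (auto simp: xs_def)
  then obtain x y z where "xs = [x,y,z]"
    by (metis (no_types) length_0_conv length_Suc_conv numeral_3_eq_3)
  with T that show ?thesis by auto
qed

lemma neg1_pow_2q: "(-1::'k::field) ^ (n + 2*q) = (-1) ^ n"
  by (simp add: power_add power_mult)

text \<open>The boundary of the \<open>p\<close>-dimensional cross-polytope on the pairs \<open>{a i, b i}\<close>, \<open>i < p\<close>:
  its faces are the subsets of the \<open>2p\<close> vertices containing no pair.  Its facets are the
  transversals (one vertex from each pair); their signed sum \<open>fund\<close> is the fundamental cycle,
  which we show to be a nonzero class in degree \<open>p - 1\<close>.\<close>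
locale cross_polytope =
  fixes a b :: "nat \<Rightarrow> nat" and p :: nat
  assumes a_ne_b: "\<And>i j. i < p \<Longrightarrow> j < p \<Longrightarrow> a i \<noteq> b j"
    and a_inj: "\<And>i j. i < p \<Longrightarrow> j < p \<Longrightarrow> a i = a j \<Longrightarrow> i = j"
    and b_inj: "\<And>i j. i < p \<Longrightarrow> j < p \<Longrightarrow> b i = b j \<Longrightarrow> i = j"
begin

definition ground :: "nat set" where
  "ground = a ` {..<p} \<union> b ` {..<p}"

definition transversal :: "nat set \<Rightarrow> bool" where
  "transversal T \<longleftrightarrow> T \<subseteq> ground \<and> (\<forall>i<p. a i \<in> T \<longleftrightarrow> b i \<notin> T)"

definition pick :: "nat set \<Rightarrow> nat \<Rightarrow> nat" where
  "pick T i = (if a i \<in> T then a i else b i)"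

definition faces :: "nat set set" where
  "faces = {T. T \<subseteq> ground \<and> (\<forall>i<p. \<not> (a i \<in> T \<and> b i \<in> T))}"

definition gap :: "nat set \<Rightarrow> nat \<Rightarrow> bool" where
  "gap G j \<longleftrightarrow> G \<subseteq> ground \<and> a j \<notin> G \<and> b j \<notin> G \<and>
    (\<forall>i<p. i \<noteq> j \<longrightarrow> (a i \<in> G \<longleftrightarrow> b i \<notin> G))"

definition fund :: "nat set \<Rightarrow> 'k::field" where
  "fund T = (if transversal T then (-1) ^ (card {i. i < p \<and> b i \<in> T} +
       card {(i,i'). i < p \<and> i' < i \<and> pick T i < pick T i'}) else 0)"

lemma finite_ground: "finite ground" unfolding ground_def by simp

lemma pick_inj: "i < p \<Longrightarrow> i' < p \<Longrightarrow> pick T i = pick T i' \<Longrightarrow> i = i'"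
  unfolding pick_def using a_ne_b a_inj b_inj by (auto split: if_splits) (metis)+

lemma verts_faces: "verts faces = ground"
proof
  show "verts faces \<subseteq> ground" unfolding verts_def faces_def by auto
  show "ground \<subseteq> verts faces"
  proof
    fix w assume w: "w \<in> ground"
    have "{w} \<in> faces" using w a_ne_b unfolding faces_def by (auto, metis)
    thus "w \<in> verts faces" unfolding verts_def by auto
  qed
qed

lemma transversal_face: "transversal T \<Longrightarrow> T \<in> faces"
  unfolding transversal_def faces_def by auto

lemma transversal_eq_picks: "transversal T \<Longrightarrow> T = pick T ` {..<p}"
proof -
  assume t: "transversal T"
  show ?thesis
  proof
    show "T \<subseteq> pick T ` {..<p}"
    proof
      fix x assume x: "x \<in> T"
      then have "x \<in> ground" using t transversal_def by auto
      then obtain i where i: "i < p" "x = a i \<or> x = b i" unfolding ground_def by auto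
      then have "pick T i = x" using t x unfolding transversal_def pick_def by auto
      thus "x \<in> pick T ` {..<p}" using i by auto
    qed
    show "pick T ` {..<p} \<subseteq> T" using t unfolding transversal_def pick_def by auto
  qed
qed

lemma card_transversal: "transversal T \<Longrightarrow> card T = p"
proof -
  assume t: "transversal T"
  have "inj_on (pick T) {..<p}" by (rule inj_onI) (use pick_inj in auto)
  then have "card (pick T ` {..<p}) = p" by (simp add: card_image)
  thus ?thesis using transversal_eq_picks[OF t] by simp
qed

lemma card_face_le: "T \<in> faces \<Longrightarrow> card T \<le> p"
proof -
  assume T: "T \<in> faces"
  define idx where "idx u = (SOME i. i < p \<and> (u = a i \<or> u = b i))" for u
  have idx: "idx u < p \<and> (u = a (idx u) \<or> u = b (idx u))" if "u \<in> T" for u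
  proof -
    have "u \<in> ground" using T that faces_def by auto
    then have "\<exists>i. i < p \<and> (u = a i \<or> u = b i)" unfolding ground_def by auto
    thus ?thesis unfolding idx_def by (rule someI_ex)
  qed
  have "inj_on idx T"
  proof (rule inj_onI)
    fix u v assume u: "u \<in> T" and v: "v \<in> T" and e: "idx u = idx v"
    have np: "\<not> (a (idx u) \<in> T \<and> b (idx u) \<in> T)" using T idx[OF u] unfolding faces_def by auto
    show "u = v" using idx[OF u] idx[OF v] e u v np by auto
  qed
  moreover have "idx ` T \<subseteq> {..<p}" using idx by auto
  ultimately have "card T \<le> card {..<p}" using card_inj_on_le by blast
  thus ?thesis by simp
qed

lemma pick_insert:
  assumes g: "gap G j" and j: "j < p" and v: "v = a j \<or> v = b j" and i: "i < p"
  shows "pick (insert v G) i = (if i = j then v else pick G i)"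
proof (cases "i = j")
  case True
  then show ?thesis using v g a_ne_b[OF j j] unfolding pick_def gap_def by auto
next
  case False
  have "a i \<noteq> v" using v a_ne_b[OF i j] a_inj[OF i j] False by auto
  then show ?thesis using False unfolding pick_def by auto
qed

lemma transversal_insert:
  assumes g: "gap G j" and j: "j < p" and v: "v = a j \<or> v = b j"
  shows "transversal (insert v G)"
proof -
  have vW: "v \<in> ground" using v j unfolding ground_def by auto
  have "\<forall>i<p. a i \<in> insert v G \<longleftrightarrow> b i \<notin> insert v G"
  proof (intro allI impI)
    fix i assume i: "i < p"
    show "a i \<in> insert v G \<longleftrightarrow> b i \<notin> insert v G"
    proof (cases "i = j")
      case True
      then show ?thesis using v g a_ne_b[OF j j] unfolding gap_def by auto
    next
      case False
      have "a i \<noteq> v" "b i \<noteq> v" using v a_ne_b[OF i j] a_ne_b[OF j i] a_inj[OF i j] b_inj[OF i j] False by auto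
      then show ?thesis using g False i unfolding gap_def by auto
    qed
  qed
  then show ?thesis using g vW unfolding transversal_def gap_def by auto
qed

lemma gap_eq_picks:
  assumes g: "gap G j" and j: "j < p"
  shows "G = pick G ` ({..<p} - {j})"
proof
  show "G \<subseteq> pick G ` ({..<p} - {j})"
  proof
    fix u assume u: "u \<in> G"
    then have "u \<in> ground" using g gap_def by auto
    then obtain i where i: "i < p" "u = a i \<or> u = b i" unfolding ground_def by auto
    have "i \<noteq> j" using i u g unfolding gap_def by auto
    moreover have "pick G i = u" using i u g \<open>i \<noteq> j\<close> unfolding gap_def pick_def by auto
    ultimately show "u \<in> pick G ` ({..<p} - {j})" using i by force
  qed
  show "pick G ` ({..<p} - {j}) \<subseteq> G" using g unfolding gap_def pick_def by auto
qed

lemma pick_neq: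
  assumes j: "j < p" and v: "v = a j \<or> v = b j" and i: "i < p" "i \<noteq> j"
  shows "pick G i \<noteq> v"
  using v a_ne_b[OF i(1) j] a_ne_b[OF j i(1)] a_inj[OF i(1) j] b_inj[OF i(1) j] i unfolding pick_def by auto

lemma inversions_insert:
  assumes g: "gap G j" and j: "j < p" and v: "v = a j \<or> v = b j"
  shows "card {(i,i'). i < p \<and> i' < i \<and> pick (insert v G) i < pick (insert v G) i'} =
    card {(i,i'). i < p \<and> i' < i \<and> i \<noteq> j \<and> i' \<noteq> j \<and> pick G i < pick G i'}
    + card {i'. i' < j \<and> v < pick G i'} + card {i. j < i \<and> i < p \<and> pick G i < v}"
proof -
  let ?T = "insert v G"
  have st: "\<And>i. i < p \<Longrightarrow> pick ?T i = (if i = j then v else pick G i)"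
    using pick_insert[OF g j v] by blast
  define S0 where "S0 = {(i,i'). i < p \<and> i' < i \<and> i \<noteq> j \<and> i' \<noteq> j \<and> pick G i < pick G i'}"
  define P where "P = {i'. i' < j \<and> v < pick G i'}"
  define Q where "Q = {i. j < i \<and> i < p \<and> pick G i < v}"
  have eq: "{(i,i'). i < p \<and> i' < i \<and> pick ?T i < pick ?T i'} = S0 \<union> ((\<lambda>i'. (j,i')) ` P \<union> (\<lambda>i. (i,j)) ` Q)"
  proof (rule set_eqI, clarify)
    fix x y
    show "((x,y) \<in> {(i,i'). i < p \<and> i' < i \<and> pick ?T i < pick ?T i'}) = ((x,y) \<in> S0 \<union> ((\<lambda>i'. (j,i')) ` P \<union> (\<lambda>i. (i,j)) ` Q))"
    proof (cases "x < p \<and> y < x")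
      case True
      then have "y < p" by auto
      then show ?thesis using True st[of x] st[of y] j unfolding S0_def P_def Q_def by auto
    next
      case False
      then show ?thesis using j unfolding S0_def P_def Q_def by auto
    qed
  qed
  have fS0: "finite S0" unfolding S0_def by (rule finite_subset[of _ "{..<p} \<times> {..<p}"]) auto
  have fP: "finite P" unfolding P_def by auto
  have fQ: "finite Q" unfolding Q_def by auto
  have c1: "card ((\<lambda>i'. (j,i')) ` P \<union> (\<lambda>i. (i,j)) ` Q) = card P + card Q"
    by (subst card_Un_disjoint) (use fP fQ in \<open>auto simp: card_image inj_on_def P_def Q_def\<close>)
  have "card (S0 \<union> ((\<lambda>i'. (j,i')) ` P \<union> (\<lambda>i. (i,j)) ` Q)) = card S0 + card ((\<lambda>i'. (j,i')) ` P \<union> (\<lambda>i. (i,j)) ` Q)"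
    by (rule card_Un_disjoint) (use fS0 fP fQ in \<open>auto simp: S0_def\<close>)
  then show ?thesis using eq c1 unfolding S0_def P_def Q_def by simp
qed

lemma smaller_insert:
  assumes g: "gap G j" and j: "j < p" and v: "v = a j \<or> v = b j"
  shows "card {u \<in> G. u < v} = card {i. i < j \<and> pick G i < v} + card {i. j < i \<and> i < p \<and> pick G i < v}"
proof -
  have inj: "inj_on (pick G) {..<p}" by (rule inj_onI) (use pick_inj in auto)
  have "{u \<in> G. u < v} = pick G ` ({i. i < j \<and> pick G i < v} \<union> {i. j < i \<and> i < p \<and> pick G i < v})"
  proof
    show "{u \<in> G. u < v} \<subseteq> pick G ` ({i. i < j \<and> pick G i < v} \<union> {i. j < i \<and> i < p \<and> pick G i < v})"
    proof
      fix x assume x: "x \<in> {u \<in> G. u < v}"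
      then obtain i where i: "i < p" "i \<noteq> j" "x = pick G i" using gap_eq_picks[OF g j] by blast
      then have "i < j \<or> j < i" by auto
      then show "x \<in> pick G ` ({i. i < j \<and> pick G i < v} \<union> {i. j < i \<and> i < p \<and> pick G i < v})"
        using i x by auto
    qed
    show "pick G ` ({i. i < j \<and> pick G i < v} \<union> {i. j < i \<and> i < p \<and> pick G i < v}) \<subseteq> {u \<in> G. u < v}"
    proof
      fix x assume "x \<in> pick G ` ({i. i < j \<and> pick G i < v} \<union> {i. j < i \<and> i < p \<and> pick G i < v})"
      then obtain i where i0: "i < j \<and> pick G i < v \<or> j < i \<and> i < p \<and> pick G i < v" and ix: "x = pick G i" by auto
      then have i: "i < p" "i \<noteq> j" "x = pick G i" "x < v" using j by auto
      have "x \<in> G" using i by (subst gap_eq_picks[OF g j]) auto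
      then show "x \<in> {u \<in> G. u < v}" using i by auto
    qed
  qed
  moreover have "inj_on (pick G) ({i. i < j \<and> pick G i < v} \<union> {i. j < i \<and> i < p \<and> pick G i < v})"
    by (rule inj_on_subset[OF inj]) (use j in auto)
  ultimately have "card {u \<in> G. u < v} = card ({i. i < j \<and> pick G i < v} \<union> {i. j < i \<and> i < p \<and> pick G i < v})"
    by (simp add: card_image)
  also have "\<dots> = card {i. i < j \<and> pick G i < v} + card {i. j < i \<and> i < p \<and> pick G i < v}"
    by (rule card_Un_disjoint) auto
  finally show ?thesis .
qed

lemma card_prefix_split:
  assumes j: "j < p" and v: "v = a j \<or> v = b j"
  shows "card {i'. i' < j \<and> v < pick G i'} + card {i. i < j \<and> pick G i < v} = j"
proof -
  have "{i'. i' < j \<and> v < pick G i'} \<union> {i. i < j \<and> pick G i < v} = {..<j}"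
  proof (rule set_eqI)
    fix i
    show "i \<in> {i'. i' < j \<and> v < pick G i'} \<union> {i. i < j \<and> pick G i < v} \<longleftrightarrow> i \<in> {..<j}"
    proof (cases "i < j")
      case True
      then have "pick G i \<noteq> v" using pick_neq[OF j v, of i G] j by auto
      then show ?thesis using True by auto
    qed auto
  qed
  moreover have "card ({i'. i' < j \<and> v < pick G i'} \<union> {i. i < j \<and> pick G i < v}) =
     card {i'. i' < j \<and> v < pick G i'} + card {i. i < j \<and> pick G i < v}"
    by (rule card_Un_disjoint) auto
  ultimately show ?thesis by simp
qed

lemma b_count_insert_a:
  assumes g: "gap G j" and j: "j < p"
  shows "card {i. i < p \<and> b i \<in> insert (a j) G} = card {i. i < p \<and> b i \<in> G}"
proof -
  have "{i. i < p \<and> b i \<in> insert (a j) G} = {i. i < p \<and> b i \<in> G}"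
  proof -
    have "\<And>i. i < p \<Longrightarrow> b i \<noteq> a j" using a_ne_b[OF j] by metis
    thus ?thesis by auto
  qed
  thus ?thesis by simp
qed

lemma b_count_insert_b:
  assumes g: "gap G j" and j: "j < p"
  shows "card {i. i < p \<and> b i \<in> insert (b j) G} = Suc (card {i. i < p \<and> b i \<in> G})"
proof -
  have "{i. i < p \<and> b i \<in> insert (b j) G} = insert j {i. i < p \<and> b i \<in> G}"
    using b_inj[OF _ j] j by auto
  moreover have "j \<notin> {i. i < p \<and> b i \<in> G}" using g gap_def by auto
  ultimately show ?thesis by simp
qed

text \<open>Hence the boundary coefficient of the transversal \<open>G \<union> {v}\<close> at \<open>G\<close> only depends on \<open>G\<close>,
  on \<open>j\<close> and on whether \<open>v = b j\<close>: the pairs after \<open>j\<close> below \<open>v\<close> are counted twice.\<close>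
lemma sign_insert:
  assumes g: "gap G j" and j: "j < p" and v: "v = a j \<or> v = b j"
  defines "I \<equiv> card {(i,i'). i < p \<and> i' < i \<and> i \<noteq> j \<and> i' \<noteq> j \<and> pick G i < pick G i'}"
  shows "(-1) ^ card {u \<in> G. u < v} * fund (insert v G)
           = ((-1::'k::field) ^ (card {i. i < p \<and> b i \<in> insert v G} + I + j))"
proof -
  define B where "B = card {i. i < p \<and> b i \<in> insert v G}"
  define Q where "Q = card {i. j < i \<and> i < p \<and> pick G i < v}"
  define inversions where "inversions = card {(i,i'). i < p \<and> i' < i \<and> pick (insert v G) i < pick (insert v G) i'}"
  have parity: "card {u \<in> G. u < v} + (B + inversions) = (B + I + j) + 2 * Q"
    using inversions_insert[OF g j v] smaller_insert[OF g j v] card_prefix_split[OF j v, of G]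
    unfolding inversions_def I_def Q_def by simp
  have "(-1) ^ card {u \<in> G. u < v} * fund (insert v G) = (-1::'k) ^ (card {u \<in> G. u < v} + (B + inversions))"
    unfolding fund_def B_def inversions_def using transversal_insert[OF g j v] by (simp add: power_add)
  also have "\<dots> = (-1) ^ (B + I + j)" unfolding parity by (rule neg1_pow_2q)
  finally show ?thesis unfolding B_def .
qed

lemma pair_cancel:
  assumes g: "gap G j" and j: "j < p"
  shows "(-1) ^ card {u \<in> G. u < a j} * fund (insert (a j) G)
         + (-1) ^ card {u \<in> G. u < b j} * fund (insert (b j) G) = (0::'k::field)"
  using sign_insert[OF g j, of "a j", where 'k='k] sign_insert[OF g j, of "b j", where 'k='k]
    b_count_insert_a[OF g j] b_count_insert_b[OF g j] by simp

lemma gap_of_transversal_insert: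
  assumes vW: "v \<in> ground" and vG: "v \<notin> G" and t: "transversal (insert v G)"
  shows "\<exists>j<p. (v = a j \<or> v = b j) \<and> gap G j"
proof -
  obtain j where j: "j < p" "v = a j \<or> v = b j" using vW unfolding ground_def by auto
  have "gap G j"
    unfolding gap_def
  proof (intro conjI allI impI)
    show "G \<subseteq> ground" using t transversal_def by auto
    show "a j \<notin> G" using j vG t a_ne_b[OF j(1) j(1)] unfolding transversal_def by auto
    show "b j \<notin> G" using j vG t a_ne_b[OF j(1) j(1)] unfolding transversal_def by auto
    fix i assume i: "i < p" "i \<noteq> j"
    have "a i \<noteq> v" "b i \<noteq> v" using j a_ne_b[OF i(1) j(1)] a_ne_b[OF j(1) i(1)] a_inj[OF i(1) j(1)] b_inj[OF i(1) j(1)] i by auto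
    then show "a i \<in> G \<longleftrightarrow> b i \<notin> G" using t i unfolding transversal_def by auto
  qed
  then show ?thesis using j by auto
qed

lemma not_transversal_insert_other:
  assumes g: "gap G j" and j: "j < p" and vW: "v \<in> ground" and vG: "v \<notin> G"
  and va: "v \<noteq> a j" and vb: "v \<noteq> b j"
  shows "\<not> transversal (insert v G)"
proof -
  obtain i where i: "i < p" "v = a i \<or> v = b i" using vW unfolding ground_def by auto
  have "i \<noteq> j" using i va vb by auto
  then have "a i \<in> insert v G \<and> b i \<in> insert v G" using g i vG unfolding gap_def by auto
  then show ?thesis using i unfolding transversal_def by auto
qed

lemma bd_fund: "bd faces (fund :: nat set \<Rightarrow> 'k::field) G = 0"
proof -
  let ?f = "\<lambda>v. (-1) ^ card {u \<in> G. u < v} * (fund (insert v G) :: 'k)"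
  have "bd faces fund G = (\<Sum>v \<in> ground - G. ?f v)"
    unfolding bd_def verts_faces
    by (rule sum.cong) (auto simp: fund_def dest: transversal_face)
  also have "\<dots> = 0"
  proof (cases "\<exists>j<p. gap G j")
    case True
    then obtain j where g: "gap G j" and j: "j < p" by auto
    have ab_in: "{a j, b j} \<subseteq> ground - G" using g j unfolding gap_def ground_def by auto
    have "(\<Sum>v \<in> ground - G. ?f v) = (\<Sum>v \<in> {a j, b j}. ?f v)"
      by (rule sum.mono_neutral_right) (use finite_ground ab_in not_transversal_insert_other[OF g j] in \<open>auto simp: fund_def\<close>)
    also have "\<dots> = ?f (a j) + ?f (b j)" using a_ne_b[OF j j] by simp
    also have "\<dots> = 0" using pair_cancel[OF g j] by simp
    finally show ?thesis .
  next
    case False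
    have "?f v = 0" if v: "v \<in> ground - G" for v
    proof -
      have "\<not> transversal (insert v G)" using gap_of_transversal_insert[of v G] v False by auto
      thus ?thesis by (simp add: fund_def)
    qed
    then show ?thesis by simp
  qed
  finally show ?thesis .
qed

lemma homology_nonzero_faces:
  assumes p: "p \<ge> 1"
  shows "homology_nonzero TYPE('k::field) faces (p - 1)"
proof (rule homology_nonzero_top_cycle)
  show "chain faces (p - 1) (fund :: nat set \<Rightarrow> 'k)"
    unfolding chain_def using p by (auto simp: fund_def transversal_face card_transversal split: if_splits)
  show "bd faces (fund :: nat set \<Rightarrow> 'k) = (\<lambda>_. 0)" using bd_fund by auto
  show "card G \<le> Suc (p - 1)" if "G \<in> faces" for G using card_face_le[OF that] p by simp
  have "transversal (a ` {..<p})" unfolding transversal_def ground_def using a_ne_b by fastforce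
  then show "(fund (a ` {..<p}) :: 'k) \<noteq> 0" unfolding fund_def by simp
qed

end

text \<open>Graphs are symmetric relations \<open>N\<close> on \<open>nat\<close>.  We count edges as ordered pairs (\<open>arcs\<close>) and write \<open>degree\<close> for the degree in \<open>S\<close>.\<close>
definition induced_matching :: "(nat \<Rightarrow> nat \<Rightarrow> bool) \<Rightarrow> nat set \<Rightarrow> nat \<Rightarrow> bool" where
  "induced_matching N S k \<longleftrightarrow> (\<exists>a b. (\<forall>i<k. a i \<in> S \<and> b i \<in> S \<and> N (a i) (b i)) \<and>
    (\<forall>i<k. \<forall>j<k. i \<noteq> j \<longrightarrow> \<not> N (a i) (a j) \<and> \<not> N (a i) (b j) \<and> \<not> N (b i) (b j)
        \<and> a i \<noteq> a j \<and> a i \<noteq> b j \<and> b i \<noteq> b j))"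

definition arcs :: "(nat \<Rightarrow> nat \<Rightarrow> bool) \<Rightarrow> nat set \<Rightarrow> nat" where
  "arcs N S = card {(x,y). x \<in> S \<and> y \<in> S \<and> N x y}"

definition degree :: "(nat \<Rightarrow> nat \<Rightarrow> bool) \<Rightarrow> nat set \<Rightarrow> nat \<Rightarrow> nat" where
  "degree N S h = card {v \<in> S. N h v}"

lemma induced_matching_mono:
  assumes "induced_matching N S k" "S \<subseteq> S'"
  shows "induced_matching N S' k"
  using assms unfolding induced_matching_def by blast

lemma induced_matching_extend:
  assumes sym: "\<And>u v. N u v \<Longrightarrow> N v u"
    and matching: "induced_matching N B k" and a0: "a0 \<in> S" and b0: "b0 \<in> S" and n0: "N a0 b0"
    and B: "B \<subseteq> {v \<in> S. \<not> N a0 v \<and> \<not> N b0 v}"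
  shows "induced_matching N S (Suc k)"
proof -
  obtain a b where m1: "\<forall>i<k. a i \<in> B \<and> b i \<in> B \<and> N (a i) (b i)"
    and m2: "\<forall>i<k. \<forall>j<k. i \<noteq> j \<longrightarrow> \<not> N (a i) (a j) \<and> \<not> N (a i) (b j) \<and> \<not> N (b i) (b j)
        \<and> a i \<noteq> a j \<and> a i \<noteq> b j \<and> b i \<noteq> b j"
    using matching unfolding induced_matching_def by blast
  have inB: "v \<in> S \<and> \<not> N a0 v \<and> \<not> N b0 v \<and> \<not> N v a0 \<and> \<not> N v b0 \<and> v \<noteq> a0 \<and> v \<noteq> b0"
    if "v \<in> B" for v
    using that B sym n0 by blast
  let ?a = "a(k := a0)" and ?b = "b(k := b0)"
  have "\<forall>i<Suc k. ?a i \<in> S \<and> ?b i \<in> S \<and> N (?a i) (?b i)"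
    using m1 inB a0 b0 n0 by (auto simp: less_Suc_eq)
  moreover have "\<forall>i<Suc k. \<forall>j<Suc k. i \<noteq> j \<longrightarrow> \<not> N (?a i) (?a j) \<and> \<not> N (?a i) (?b j)
        \<and> \<not> N (?b i) (?b j) \<and> ?a i \<noteq> ?a j \<and> ?a i \<noteq> ?b j \<and> ?b i \<noteq> ?b j"
  proof (intro allI impI)
    fix i j assume i: "i < Suc k" and j: "j < Suc k" and ij: "i \<noteq> j"
    consider "i < k" "j < k" | "i = k" "j < k" | "i < k" "j = k" using i j ij by (auto simp: less_Suc_eq)
    then show "\<not> N (?a i) (?a j) \<and> \<not> N (?a i) (?b j) \<and> \<not> N (?b i) (?b j)
        \<and> ?a i \<noteq> ?a j \<and> ?a i \<noteq> ?b j \<and> ?b i \<noteq> ?b j"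
    proof cases
      case 1 then show ?thesis using m2 ij by auto
    next
      case 2 then show ?thesis using m1 inB[of "a j"] inB[of "b j"] by auto
    next
      case 3 then show ?thesis using m1 inB[of "a i"] inB[of "b i"] by auto
    qed
  qed
  ultimately show ?thesis unfolding induced_matching_def by blast
qed

lemma induced_matching_two:
  assumes sym: "\<And>u v. N u v \<Longrightarrow> N v u"
    and "a0 \<in> S" "b0 \<in> S" "a1 \<in> S" "b1 \<in> S" "N a0 b0" "N a1 b1"
    and "\<not> N a0 a1" "\<not> N a0 b1" "\<not> N a1 b0" "\<not> N b0 b1"
    and "a0 \<noteq> a1" "a0 \<noteq> b1" "a1 \<noteq> b0" "b0 \<noteq> b1"
  shows "induced_matching N S 2"
proof -
  have "induced_matching N {a1, b1} 1"
    unfolding induced_matching_def using \<open>N a1 b1\<close> by (intro exI[of _ "\<lambda>_. a1"] exI[of _ "\<lambda>_. b1"]) auto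
  moreover have "{a1, b1} \<subseteq> {v \<in> S. \<not> N a0 v \<and> \<not> N b0 v}"
    using assms by (auto dest: sym)
  ultimately have "induced_matching N S (Suc 1)"
    using induced_matching_extend[where N=N, OF sym] assms(2,3,6) by blast
  then show ?thesis by (simp add: numeral_2_eq_2)
qed

text \<open>The degrees of distinct vertices count distinct arcs.\<close>
lemma degree_sum_le_arcs:
  assumes S: "finite S" and H: "H \<subseteq> S"
  shows "(\<Sum>h\<in>H. degree N S h) \<le> arcs N S"
proof -
  have "(\<Sum>h\<in>H. degree N S h) = card (Sigma H (\<lambda>h. {v \<in> S. N h v}))"
    unfolding degree_def using S H by (intro card_SigmaI[symmetric]) (auto intro: finite_subset)
  also have "\<dots> \<le> arcs N S"
    unfolding arcs_def using S H
    by (intro card_mono) (auto intro: finite_subset[of _ "S \<times> S"])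
  finally show ?thesis .
qed

text \<open>Every vertex is a neighbour of \<open>u\<close>, a neighbour of \<open>v\<close>, or a common non-neighbour.\<close>
lemma card_le_degrees_plus_common_non_neighbours:
  assumes S: "finite S"
  shows "card S \<le> degree N S u + degree N S v + card {x \<in> S. \<not> N u x \<and> \<not> N v x}"
proof -
  have "S = {x \<in> S. N u x} \<union> {x \<in> S. N v x} \<union> {x \<in> S. \<not> N u x \<and> \<not> N v x}" by auto
  then have "card S \<le> card ({x \<in> S. N u x} \<union> {x \<in> S. N v x}) + card {x \<in> S. \<not> N u x \<and> \<not> N v x}"
    by (metis card_Un_le)
  also have "\<dots> \<le> degree N S u + degree N S v + card {x \<in> S. \<not> N u x \<and> \<not> N v x}"
    unfolding degree_def using card_Un_le by simp
  finally show ?thesis .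
qed

lemma arcs_from_high_degree_vertices:
  assumes S: "finite S" and m: "0 \<le> m"
    and many: "m \<le> real (card {h \<in> S. m / 4 \<le> real (degree N S h)})"
  shows "m^2 \<le> 4 * real (arcs N S)"
proof -
  define H where "H = {h \<in> S. m / 4 \<le> real (degree N S h)}"
  have "m * (m / 4) \<le> real (card H) * (m / 4)"
    using many m unfolding H_def by (intro mult_right_mono) auto
  also have "\<dots> \<le> (\<Sum>h\<in>H. real (degree N S h))"
    using sum_mono[of H "\<lambda>_. m / 4" "\<lambda>h. real (degree N S h)"] by (simp add: H_def)
  also have "\<dots> \<le> real (arcs N S)"
    using degree_sum_le_arcs[OF S, of H N] by (simp add: H_def flip: of_nat_sum)
  finally show ?thesis by (simp add: power2_eq_square)
qed

text \<open>With \<open>m = |S| - w\<close>: if the vertices of degree \<open>\<ge> m/4\<close> cover all edges, there are at least \<open>m\<close>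
  of them; otherwise an edge between two low-degree vertices has more than \<open>|S| - m/2\<close> common
  non-neighbours, which contain no induced matching of size \<open>k - 1\<close>, and induction applies.\<close>
lemma arcs_lower_bound:
  assumes sym: "\<And>u v. N u v \<Longrightarrow> N v u"
    and S: "finite S"
    and independent: "\<And>C. C \<subseteq> S \<Longrightarrow> \<forall>u\<in>C. \<forall>v\<in>C. \<not> N u v \<Longrightarrow> card C \<le> w"
    and no_matching: "\<not> induced_matching N S k"
    and w: "real w \<le> real (card S)"
  shows "(real (card S) - real w)^2 \<le> 4^k * real (arcs N S)"
  using S independent no_matching w
proof (induction k arbitrary: S)
  case 0
  then show ?case unfolding induced_matching_def by auto
next
  case (Suc k)
  define m where "m = real (card S) - real w"
  have m0: "m \<ge> 0" using Suc.prems(4) m_def by simp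
  define H where "H = {h \<in> S. m / 4 \<le> real (degree N S h)}"
  show ?case
  proof (cases "\<forall>u\<in>S. \<forall>v\<in>S. N u v \<longrightarrow> u \<in> H \<or> v \<in> H")
    case True
    then have "card (S - H) \<le> w" by (intro Suc.prems(2)) auto
    moreover have "card (S - H) = card S - card H" "card H \<le> card S"
      using Suc.prems(1) by (simp_all add: H_def card_Diff_subset card_mono)
    ultimately have m_le_H: "m \<le> real (card H)" unfolding m_def by linarith
    have "m^2 \<le> 4 * real (arcs N S)"
      using arcs_from_high_degree_vertices[OF Suc.prems(1) m0] m_le_H by (simp add: H_def)
    also have "\<dots> \<le> 4 ^ Suc k * real (arcs N S)" by (intro mult_right_mono) auto
    finally show ?thesis unfolding m_def .
  next
    case False
    then obtain a0 b0 where a0: "a0 \<in> S" and b0: "b0 \<in> S" and n0: "N a0 b0"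
      and low: "real (degree N S a0) < m / 4" "real (degree N S b0) < m / 4"
      by (auto simp: H_def)
    define B where "B = {v \<in> S. \<not> N a0 v \<and> \<not> N b0 v}"
    have B_S: "B \<subseteq> S" unfolding B_def by auto
    have "card S \<le> degree N S a0 + degree N S b0 + card B"
      unfolding B_def by (rule card_le_degrees_plus_common_non_neighbours[OF Suc.prems(1)])
    then have B_large: "real (card B) - real w > m / 2" using low m_def by linarith
    have "\<not> induced_matching N B k"
      using induced_matching_extend[where N=N, OF sym _ a0 b0 n0] Suc.prems(3) B_def by blast
    moreover have "finite B" using Suc.prems(1) B_S by (rule finite_subset[rotated])
    moreover have "card C \<le> w" if "C \<subseteq> B" "\<forall>u\<in>C. \<forall>v\<in>C. \<not> N u v" for C
      using that B_S by (intro Suc.prems(2)) auto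
    moreover have "real w \<le> real (card B)" using B_large m0 by linarith
    ultimately have "(real (card B) - real w)^2 \<le> 4^k * real (arcs N B)"
      by (intro Suc.IH) auto
    moreover have "arcs N B \<le> arcs N S"
      unfolding arcs_def using Suc.prems(1) B_S
      by (intro card_mono) (auto intro: finite_subset[of _ "S \<times> S"])
    moreover have "(m / 2)^2 \<le> (real (card B) - real w)^2"
      using B_large m0 by (intro power_mono) auto
    ultimately have "(m / 2)^2 \<le> 4^k * real (arcs N S)"
      by (smt (verit) mult_left_mono of_nat_le_iff zero_le_power)
    then show ?thesis unfolding m_def by (simp add: power2_eq_square)
  qed
qed

abbreviation nonedge :: "nat set set \<Rightarrow> nat \<Rightarrow> nat \<Rightarrow> bool" where
  "nonedge K u v \<equiv> u \<noteq> v \<and> {u,v} \<notin> K"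

lemma flag_clique_le_cdim:
  assumes sc: "simplicial_complex K" and fl: "flag K"
    and C: "C \<subseteq> verts K" "\<forall>u\<in>C. \<forall>v\<in>C. \<not> nonedge K u v"
  shows "card C \<le> cdim K"
proof -
  have "C \<in> K" by (rule flagD[OF fl]) (use C in auto)
  then show ?thesis by (rule card_face_le_cdim[OF sc])
qed

lemma (in cross_polytope) induced_flag_eq_faces:
  assumes sc: "simplicial_complex K" and fl: "flag K" and ground_verts: "ground \<subseteq> verts K"
    and pairs: "\<And>i. i < p \<Longrightarrow> {a i, b i} \<notin> K"
    and cross: "\<And>i j. i < p \<Longrightarrow> j < p \<Longrightarrow> i \<noteq> j \<Longrightarrow> {a i, a j} \<in> K \<and> {a i, b j} \<in> K \<and> {b i, b j} \<in> K"
  shows "induced K ground = faces"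
proof -
  have "T \<in> K \<longleftrightarrow> T \<in> faces" if T: "T \<subseteq> ground" for T
  proof
    assume "T \<in> K"
    then have "\<not> (a i \<in> T \<and> b i \<in> T)" if "i < p" for i
      using face_subset[OF sc, of T "{a i, b i}"] pairs[OF that] by blast
    then show "T \<in> faces" using T unfolding faces_def by blast
  next
    assume "T \<in> faces"
    then have no_pair: "\<forall>i<p. \<not> (a i \<in> T \<and> b i \<in> T)" unfolding faces_def by blast
    have edge: "{u,v} \<in> K" if u: "u \<in> T" and v: "v \<in> T" and uv: "u \<noteq> v" for u v
    proof -
      obtain i where i: "i < p" "u = a i \<or> u = b i" using u T ground_def by auto
      obtain j where j: "j < p" "v = a j \<or> v = b j" using v T ground_def by auto
      show ?thesis
      proof (cases "i = j")
        case True
        then show ?thesis using i j u v uv no_pair by auto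
      next
        case False
        then show ?thesis using i j uv cross[OF i(1) j(1)] cross[OF j(1) i(1)] by (auto simp: insert_commute)
      qed
    qed
    show "T \<in> K" by (rule flagD[OF fl _ edge]) (use T ground_verts in auto)
  qed
  moreover have "T \<in> faces \<Longrightarrow> T \<subseteq> ground" for T unfolding faces_def by blast
  ultimately show ?thesis unfolding induced_def by blast
qed

text \<open>An induced matching of size \<open>p\<close> in the non-edge graph of a flag complex induces the
  boundary of a \<open>p\<close>-dimensional cross-polytope on \<open>2p\<close> vertices, so \<open>gr(p-1) \<le> 2p\<close>.\<close>
lemma flag_cross_polytope_girth:
  assumes sc: "simplicial_complex K" and fl: "flag K" and p: "p \<ge> 1"
    and matching: "induced_matching (nonedge K) (verts K) p"
  shows "girth TYPE('k::field) K (p - 1) \<le> enat (2 * p)"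
proof -
  obtain a b where m1: "\<forall>i<p. a i \<in> verts K \<and> b i \<in> verts K \<and> nonedge K (a i) (b i)"
    and m2: "\<forall>i<p. \<forall>j<p. i \<noteq> j \<longrightarrow> \<not> nonedge K (a i) (a j) \<and> \<not> nonedge K (a i) (b j)
        \<and> \<not> nonedge K (b i) (b j) \<and> a i \<noteq> a j \<and> a i \<noteq> b j \<and> b i \<noteq> b j"
    using matching unfolding induced_matching_def by blast
  interpret cross_polytope a b p
  proof
    fix i j assume i: "i < p" and j: "j < p"
    show "a i \<noteq> b j" using m1 m2 i j by (cases "i = j") auto
    show "a i = a j \<Longrightarrow> i = j" using m2 i j by auto
    show "b i = b j \<Longrightarrow> i = j" using m2 i j by auto
  qed
  have ground_verts: "ground \<subseteq> verts K" unfolding ground_def using m1 by auto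
  have "induced (link K {}) ground = faces"
    unfolding link_empty using m1 m2 by (intro induced_flag_eq_faces[OF sc fl ground_verts]) auto
  then have "homology_nonzero TYPE('k) (induced (link K {}) ground) (p - 1)"
    using homology_nonzero_faces[OF p] by simp
  then have "girth TYPE('k) K (p - 1) \<le> enat (card ground)"
    using girth_le[OF ground_verts empty_face[OF sc]] by blast
  moreover have "card ground \<le> 2 * p"
    unfolding ground_def using card_Un_le[of "a ` {..<p}" "b ` {..<p}"]
      card_image_le[of "{..<p}" a] card_image_le[of "{..<p}" b] by simp
  ultimately show ?thesis by (meson enat_ord_simps(1) order_trans)
qed

definition missing_edges :: "nat set set \<Rightarrow> nat set set" where
  "missing_edges K = {F. F \<subseteq> verts K \<and> card F = 2 \<and> F \<notin> K}"

lemma real_f1_eq: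
  assumes sc: "simplicial_complex K"
  shows "real (f1 K) = real (card (verts K) choose 2) - real (card (missing_edges K))"
proof -
  define A where "A = {F. F \<subseteq> verts K \<and> card F = 2}"
  have fin: "finite A" unfolding A_def using finite_verts[OF sc] by auto
  have sub: "missing_edges K \<subseteq> A" unfolding missing_edges_def A_def by auto
  have "{F \<in> K. card F = 2} = A - missing_edges K"
    unfolding A_def missing_edges_def using face_subset_verts[of _ K] by auto
  then have "f1 K = card A - card (missing_edges K)"
    unfolding f1_def using card_Diff_subset[OF finite_subset[OF sub fin] sub] by simp
  moreover have "card A = card (verts K) choose 2"
    unfolding A_def by (rule n_subsets[OF finite_verts[OF sc]])
  moreover have "card (missing_edges K) \<le> card A" by (rule card_mono[OF fin sub])
  ultimately show ?thesis by simp
qed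

text \<open>Each non-edge gives two arcs of the non-edge graph.\<close>
lemma arcs_nonedge_le:
  assumes sc: "simplicial_complex K"
  shows "arcs (nonedge K) (verts K) \<le> 2 * card (missing_edges K)"
proof -
  define V where "V = verts K"
  define P where "P = {(x,y). x \<in> V \<and> y \<in> V \<and> x < y \<and> {x,y} \<notin> K}"
  have fin: "finite P" unfolding P_def
    by (rule finite_subset[of _ "V \<times> V"]) (use finite_verts[OF sc] in \<open>auto simp: V_def\<close>)
  have "{(x,y). x \<in> V \<and> y \<in> V \<and> nonedge K x y} = P \<union> prod.swap ` P"
    unfolding P_def by (auto simp: insert_commute neq_iff)
  then have "arcs (nonedge K) V \<le> card P + card (prod.swap ` P)"
    unfolding arcs_def by (metis card_Un_le)
  also have "\<dots> = 2 * card P" by (simp add: card_image)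
  also have "card P \<le> card (missing_edges K)"
  proof (rule card_inj_on_le)
    show "inj_on (\<lambda>(x,y). {x,y}) P"
      unfolding P_def by (rule inj_onI) (auto simp: doubleton_eq_iff)
    show "(\<lambda>(x,y). {x,y}) ` P \<subseteq> missing_edges K"
      unfolding P_def missing_edges_def V_def by auto
    show "finite (missing_edges K)"
      unfolding missing_edges_def using finite_verts[OF sc] by auto
  qed
  finally show ?thesis unfolding V_def by simp
qed

lemma flag_girth_missing_edges:
  assumes sc: "simplicial_complex K" and fl: "flag K" and p: "p \<ge> 1"
    and girth: "girth TYPE('k::field) K (p - 1) > enat (2 * p)"
  shows "(real (card (verts K)) - real (cdim K))^2 \<le> 2 * 4^p * real (card (missing_edges K))"
proof -
  have "\<not> induced_matching (nonedge K) (verts K) p"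
    using flag_cross_polytope_girth[OF sc fl p, where 'k='k] girth by fastforce
  then have "(real (card (verts K)) - real (cdim K))^2 \<le> 4^p * real (arcs (nonedge K) (verts K))"
    using flag_clique_le_cdim[OF sc fl] cdim_le_card_verts[OF sc]
    by (intro arcs_lower_bound[OF _ finite_verts[OF sc]]) (auto simp: insert_commute)
  also have "\<dots> \<le> 4^p * (2 * real (card (missing_edges K)))"
    using arcs_nonedge_le[OF sc] by (intro mult_left_mono) auto
  finally show ?thesis by simp
qed

lemma flag_edge_bound:
  assumes p: "p \<ge> 1" and \<delta>: "(\<delta>::real) > 0"
  shows "\<exists>\<epsilon>::real. \<epsilon> > 0 \<and>
           (\<forall>\<Gamma>::nat set set. simplicial_complex \<Gamma> \<and> flag \<Gamma> \<and>
               girth TYPE('k::field) \<Gamma> (p - 1) > enat (2 * p) \<and>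
               real (cdim \<Gamma>) < (1 - \<delta>) * real (card (verts \<Gamma>)) \<longrightarrow>
               real (f1 \<Gamma>) < real (card (verts \<Gamma>) choose 2) - \<epsilon> * real (card (verts \<Gamma>)) ^ 2)"
proof (intro exI conjI allI impI)
  show "\<delta>^2 / (2 * 4^p) > 0" using \<delta> by simp
  fix K :: "nat set set"
  assume "simplicial_complex K \<and> flag K \<and> girth TYPE('k) K (p - 1) > enat (2 * p) \<and>
    real (cdim K) < (1 - \<delta>) * real (card (verts K))"
  then have sc: "simplicial_complex K" and fl: "flag K" and girth: "girth TYPE('k) K (p - 1) > enat (2 * p)"
    and small: "real (cdim K) < (1 - \<delta>) * real (card (verts K))" by auto
  define n where "n = real (card (verts K))"
  have "0 \<le> \<delta> * n" using \<delta> by (simp add: n_def)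
  moreover have "\<delta> * n < n - real (cdim K)" using small by (simp add: n_def algebra_simps)
  ultimately have "(\<delta> * n)^2 < (n - real (cdim K))^2" by (intro power_strict_mono) auto
  also have "\<dots> \<le> 2 * 4^p * real (card (missing_edges K))"
    unfolding n_def by (rule flag_girth_missing_edges[OF sc fl p girth])
  finally have "\<delta>^2 / (2 * 4^p) * n^2 < real (card (missing_edges K))"
    by (simp add: field_simps power_mult_distrib)
  then show "real (f1 K) < real (card (verts K) choose 2) - \<delta>^2 / (2 * 4^p) * real (card (verts K)) ^ 2"
    using real_f1_eq[OF sc] by (simp add: n_def)
qed

lemma missing_face_link:
  assumes sc: "simplicial_complex K" and C: "C \<notin> K" and proper: "\<And>D. D \<subset> C \<Longrightarrow> D \<in> K"
    and T: "T \<subseteq> C"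
  shows "induced (link K (C - T)) T = {S. S \<subseteq> T \<and> S \<noteq> T}"
proof (rule set_eqI, rule iffI)
  fix S assume "S \<in> induced (link K (C - T)) T"
  then obtain G where G: "G \<in> K" "C - T \<subseteq> G" "S = G - (C - T)" and S: "S \<subseteq> T"
    unfolding induced_def link_def by blast
  have "S \<noteq> T"
  proof
    assume "S = T"
    then have "C \<subseteq> G" using G by blast
    then show False using C face_subset[OF sc G(1)] by blast
  qed
  then show "S \<in> {S. S \<subseteq> T \<and> S \<noteq> T}" using S by blast
next
  fix S assume "S \<in> {S. S \<subseteq> T \<and> S \<noteq> T}"
  then have S: "S \<subseteq> T" "S \<noteq> T" by auto
  have "(C - T) \<union> S \<subset> C" using S T by blast
  then have "(C - T) \<union> S \<in> K" by (rule proper)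
  moreover have "((C - T) \<union> S) - (C - T) = S" using S T by blast
  ultimately show "S \<in> induced (link K (C - T)) T"
    unfolding induced_def link_def using S by blast
qed

text \<open>A complex with \<open>gr(1) > 4\<close> is flag: a minimal non-face clique \<open>C\<close> with at least three
  vertices would contain a triple \<open>T\<close> whose link-restriction is a hollow triangle.\<close>
lemma girth1_flag:
  assumes sc: "simplicial_complex K" and girth: "girth TYPE('k::field) K 1 > enat 4"
  shows "flag K"
  unfolding flag_def
proof (intro allI impI)
  fix C assume "C \<subseteq> verts K" "\<forall>u\<in>C. \<forall>v\<in>C. u \<noteq> v \<longrightarrow> {u,v} \<in> K"
  then show "C \<in> K"
  proof (induction "card C" arbitrary: C rule: less_induct)
    case less
    have finC: "finite C" using less.prems(1) finite_verts[OF sc] finite_subset by blast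
    have proper: "D \<in> K" if D: "D \<subset> C" for D
    proof (rule less.hyps)
      show "card D < card C" by (rule psubset_card_mono[OF finC D])
      show "D \<subseteq> verts K" "\<forall>u\<in>D. \<forall>v\<in>D. u \<noteq> v \<longrightarrow> {u,v} \<in> K"
        using D less.prems by blast+
    qed
    show ?case
    proof (cases "card C \<le> 2")
      case True
      then show ?thesis using small_clique_face[OF sc less.prems] by blast
    next
      case False
      then have "3 \<le> card C" by simp
      then obtain T where T: "T \<subseteq> C" "card T = 3" by (meson obtain_subset_with_card_n)
      obtain x y z where xyz: "T = {x,y,z}" "x < y" "y < z" by (rule card_3_sorted[OF T(2)])
      show ?thesis
      proof (rule ccontr)
        assume C: "C \<notin> K"
        have "C - T \<in> K" using T(1) xyz(1) by (intro proper) auto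
        moreover have "homology_nonzero TYPE('k) (induced (link K (C - T)) T) 1"
        proof -
          interpret sorted_triple x y z using xyz(2,3) by unfold_locales
          show ?thesis
            using missing_face_link[OF sc C proper T(1)] homology_nonzero_hollow[where 'k='k]
            unfolding xyz(1) hollow_def by simp
        qed
        ultimately have "girth TYPE('k) K 1 \<le> enat 3"
          using girth_le[of T K] T less.prems(1) by fastforce
        with girth have "enat 4 < enat 3" by (rule less_le_trans)
        then show False by simp
      qed
    qed
  qed
qed

text \<open>Consequently its non-edge graph has no induced matching of size 2 (no induced 4-cycle
  in the 1-skeleton), since that would give a hollow square.\<close>
lemma girth1_no_induced_square:
  assumes sc: "simplicial_complex K" and girth: "girth TYPE('k::field) K 1 > enat 4"
  shows "\<not> induced_matching (nonedge K) (verts K) 2"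
proof
  assume square: "induced_matching (nonedge K) (verts K) 2"
  have "girth TYPE('k) K (2 - 1) \<le> enat (2 * 2)"
    by (rule flag_cross_polytope_girth[OF sc girth1_flag[OF sc girth] _ square]) simp
  with girth show False by simp
qed

definition nbhd :: "nat set set \<Rightarrow> nat \<Rightarrow> nat set" where
  "nbhd K v = {u \<in> verts K. u \<noteq> v \<and> {v,u} \<in> K}"

lemma nonedge_sym: "nonedge K u v \<Longrightarrow> nonedge K v u"
  by (auto simp: insert_commute)

text \<open>Without induced squares, the common neighbours of two non-adjacent vertices are pairwise
  adjacent, hence form a face.\<close>
lemma common_nbhd_card_le:
  assumes sc: "simplicial_complex K" and fl: "flag K"
    and square: "\<not> induced_matching (nonedge K) (verts K) 2"
    and xy: "x \<in> verts K" "y \<in> verts K" "nonedge K x y"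
  shows "card (nbhd K x \<inter> nbhd K y) \<le> cdim K"
proof -
  have "nbhd K x \<inter> nbhd K y \<in> K"
  proof (rule flagD[OF fl])
    show "nbhd K x \<inter> nbhd K y \<subseteq> verts K" by (auto simp: nbhd_def)
    fix u u' assume u: "u \<in> nbhd K x \<inter> nbhd K y" and u': "u' \<in> nbhd K x \<inter> nbhd K y" and uu': "u \<noteq> u'"
    show "{u,u'} \<in> K"
    proof (rule ccontr)
      assume "{u,u'} \<notin> K"
      then have "induced_matching (nonedge K) (verts K) 2"
        by (intro induced_matching_two[of "nonedge K" x _ y u u', OF nonedge_sym])
          (use xy u u' uu' in \<open>auto simp: nbhd_def insert_commute\<close>)
      with square show False ..
    qed
  qed
  then show ?thesis by (rule card_face_le_cdim[OF sc])
qed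

text \<open>Double counting triples (apex, non-edge in its neighbourhood): every non-edge has at most
  \<open>d\<close> common neighbours, so the neighbourhoods together contain at most \<open>n\<^sup>2 d\<close> non-edge arcs.\<close>
lemma sum_nbhd_arcs_le:
  assumes sc: "simplicial_complex K" and fl: "flag K"
    and square: "\<not> induced_matching (nonedge K) (verts K) 2"
  shows "(\<Sum>v\<in>verts K. arcs (nonedge K) (nbhd K v)) \<le> card (verts K) ^ 2 * cdim K"
proof -
  define V where "V = verts K"
  define arcs_at where "arcs_at v = {(x,y). x \<in> nbhd K v \<and> y \<in> nbhd K v \<and> nonedge K x y}" for v
  define apexes where "apexes q = {v \<in> nbhd K (fst q) \<inter> nbhd K (snd q). nonedge K (fst q) (snd q)}" for q
  have finV: "finite V" unfolding V_def by (rule finite_verts[OF sc])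
  have nbhd_V: "nbhd K v \<subseteq> V" for v unfolding nbhd_def V_def by auto
  have fin_arcs_at: "finite (arcs_at v)" for v
    unfolding arcs_at_def using finV nbhd_V by (auto intro: finite_subset[of _ "V \<times> V"])
  have fin_apexes: "finite (apexes q)" for q
    unfolding apexes_def using finV nbhd_V by (auto intro: finite_subset)
  have "(\<Sum>v\<in>V. arcs (nonedge K) (nbhd K v)) = card (Sigma V arcs_at)"
    unfolding arcs_def arcs_at_def using finV fin_arcs_at by (simp add: card_SigmaI arcs_at_def)
  also have "\<dots> \<le> card (Sigma (V \<times> V) apexes)"
  proof (rule card_inj_on_le)
    show "inj_on (\<lambda>(v,q). (q,v)) (Sigma V arcs_at)" by (rule inj_onI) auto
    show "(\<lambda>(v,q). (q,v)) ` Sigma V arcs_at \<subseteq> Sigma (V \<times> V) apexes"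
      unfolding arcs_at_def apexes_def nbhd_def V_def by (auto simp: insert_commute)
    show "finite (Sigma (V \<times> V) apexes)" using finV fin_apexes by auto
  qed
  also have "\<dots> = (\<Sum>q\<in>V \<times> V. card (apexes q))" using finV fin_apexes by (simp add: card_SigmaI)
  also have "\<dots> \<le> (\<Sum>q\<in>V \<times> V. cdim K)"
  proof (rule sum_mono)
    fix q assume q: "q \<in> V \<times> V"
    show "card (apexes q) \<le> cdim K"
    proof (cases "nonedge K (fst q) (snd q)")
      case True
      then have "apexes q = nbhd K (fst q) \<inter> nbhd K (snd q)" unfolding apexes_def by auto
      then show ?thesis using common_nbhd_card_le[OF sc fl square] q True by (auto simp: V_def)
    next
      case False
      then have "apexes q = {}" unfolding apexes_def by blast
      then show ?thesis by simp
    qed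
  qed
  finally show ?thesis by (simp add: V_def card_cartesian_product power2_eq_square)
qed

text \<open>Every edge is counted by the degree of each of its endpoints.\<close>
lemma f1_le_sum_degrees:
  assumes sc: "simplicial_complex K"
  shows "f1 K \<le> (\<Sum>v\<in>verts K. card (nbhd K v))"
proof -
  define V where "V = verts K"
  have finV: "finite V" unfolding V_def by (rule finite_verts[OF sc])
  have fin: "finite (Sigma V (nbhd K))"
    using finV by (auto simp: nbhd_def V_def)
  have "{F \<in> K. card F = 2} \<subseteq> (\<lambda>(x,y). {x,y}) ` Sigma V (nbhd K)"
  proof
    fix F assume "F \<in> {F \<in> K. card F = 2}"
    then obtain x y where F: "F \<in> K" "F = {x,y}" "x \<noteq> y" by (auto simp: card_2_iff)
    then have "(x,y) \<in> Sigma V (nbhd K)"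
      using face_subset_verts[OF F(1)] by (auto simp: nbhd_def V_def)
    then show "F \<in> (\<lambda>(x,y). {x,y}) ` Sigma V (nbhd K)" using F(2) by force
  qed
  then have "f1 K \<le> card ((\<lambda>(x,y). {x,y}) ` Sigma V (nbhd K))"
    unfolding f1_def using fin by (intro card_mono) auto
  also have "\<dots> \<le> card (Sigma V (nbhd K))" by (rule card_image_le[OF fin])
  also have "\<dots> = (\<Sum>v\<in>V. card (nbhd K v))"
    using finV fin by (intro card_SigmaI) (auto simp: nbhd_def V_def)
  finally show ?thesis unfolding V_def .
qed

text \<open>The counting lemma applied inside a neighbourhood of size at least \<open>2d\<close>: such a
  neighbourhood contains many non-edges.\<close>
lemma large_nbhd_arcs:
  assumes sc: "simplicial_complex K" and fl: "flag K"
    and square: "\<not> induced_matching (nonedge K) (verts K) 2"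
    and large: "2 * cdim K \<le> card (nbhd K v)"
  shows "real (card (nbhd K v))^2 \<le> 64 * real (arcs (nonedge K) (nbhd K v))"
proof -
  define d where "d = real (card (nbhd K v))"
  define w where "w = real (cdim K)"
  have nbhd_verts: "nbhd K v \<subseteq> verts K" by (auto simp: nbhd_def)
  have "(d - w)^2 \<le> 4^2 * real (arcs (nonedge K) (nbhd K v))"
    unfolding d_def w_def
  proof (rule arcs_lower_bound[OF nonedge_sym])
    show "finite (nbhd K v)" using finite_verts[OF sc] nbhd_verts by (rule finite_subset[rotated])
    show "card C \<le> cdim K" if "C \<subseteq> nbhd K v" "\<forall>u\<in>C. \<forall>u'\<in>C. \<not> nonedge K u u'" for C
      by (rule flag_clique_le_cdim[OF sc fl]) (use that nbhd_verts in auto)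
    show "\<not> induced_matching (nonedge K) (nbhd K v) 2"
      using square induced_matching_mono[OF _ nbhd_verts] by blast
    show "real (cdim K) \<le> real (card (nbhd K v))" using large by simp
  qed
  moreover have "(d / 2)^2 \<le> (d - w)^2"
    using large by (intro power_mono) (auto simp: d_def w_def)
  ultimately show ?thesis by (simp add: d_def power_divide)
qed

lemma sum_squares_of_large_terms:
  fixes f :: "'a \<Rightarrow> real"
  assumes fin: "finite V" and \<alpha>: "0 \<le> \<alpha>"
    and total: "2 * \<alpha> * real (card V)^2 \<le> (\<Sum>v\<in>V. f v)"
  shows "\<alpha>^2 * real (card V)^3 \<le> (\<Sum>v\<in>{v\<in>V. \<alpha> * real (card V) \<le> f v}. f v ^ 2)"
proof -
  define n where "n = real (card V)"
  define H where "H = {v\<in>V. \<alpha> * n \<le> f v}"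
  have HV: "H \<subseteq> V" unfolding H_def by auto
  have "(\<Sum>v\<in>V - H. f v) \<le> real (card (V - H)) * (\<alpha> * n)"
    by (rule sum_bounded_above) (auto simp: H_def)
  also have "\<dots> \<le> n * (\<alpha> * n)"
    using fin \<alpha> by (intro mult_right_mono) (auto simp: n_def card_mono)
  also have "\<dots> = \<alpha> * n^2" by (simp add: power2_eq_square)
  finally have "(\<Sum>v\<in>V - H. f v) \<le> \<alpha> * n^2" .
  moreover have "(\<Sum>v\<in>V. f v) = (\<Sum>v\<in>H. f v) + (\<Sum>v\<in>V - H. f v)"
    using sum.subset_diff[OF HV fin, of f] by simp
  ultimately have "\<alpha> * n^2 \<le> (\<Sum>v\<in>H. f v)" using total unfolding n_def by linarith
  then have "\<alpha> * n * (\<alpha> * n^2) \<le> \<alpha> * n * (\<Sum>v\<in>H. f v)"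
    using \<alpha> by (intro mult_left_mono) (auto simp: n_def)
  also have "\<dots> = (\<Sum>v\<in>H. \<alpha> * n * f v)" by (simp add: sum_distrib_left)
  also have "\<dots> \<le> (\<Sum>v\<in>H. f v ^ 2)"
  proof (rule sum_mono)
    fix v assume "v \<in> H"
    moreover have "0 \<le> \<alpha> * n" using \<alpha> by (simp add: n_def)
    ultimately have "\<alpha> * n \<le> f v" "0 \<le> f v" by (auto simp: H_def n_def)
    then show "\<alpha> * n * f v \<le> f v ^ 2" using mult_right_mono by (auto simp: power2_eq_square)
  qed
  finally show ?thesis by (simp add: H_def n_def power2_eq_square power3_eq_cube algebra_simps)
qed

text \<open>The counting behind part (2): if \<open>gr(1) > 4\<close>, \<open>2d \<le> \<alpha> n\<close> and there are at least \<open>2\<alpha>n\<^sup>2\<close>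
  edges, then vertices of degree \<open>\<ge> \<alpha> n\<close> have neighbourhoods with many non-edges, while every
  non-edge lies in at most \<open>d\<close> neighbourhoods; hence \<open>\<alpha>\<^sup>2n\<^sup>3 \<le> 64 n\<^sup>2 d\<close>.\<close>
lemma many_edges_force_dimension:
  assumes sc: "simplicial_complex K" and girth: "girth TYPE('k::field) K 1 > enat 4"
    and \<alpha>: "0 \<le> \<alpha>" and low_dim: "2 * real (cdim K) \<le> \<alpha> * real (card (verts K))"
    and many_edges: "2 * \<alpha> * real (card (verts K))^2 \<le> real (f1 K)"
  shows "\<alpha>^2 * real (card (verts K))^3 \<le> 64 * (real (card (verts K))^2 * real (cdim K))"
proof -
  define V where "V = verts K"
  define n where "n = real (card V)"
  define d where "d v = real (card (nbhd K v))" for v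
  define Q where "Q v = real (arcs (nonedge K) (nbhd K v))" for v
  have fl: "flag K" by (rule girth1_flag[OF sc girth])
  have square: "\<not> induced_matching (nonedge K) (verts K) 2" by (rule girth1_no_induced_square[OF sc girth])
  have finV: "finite V" unfolding V_def by (rule finite_verts[OF sc])
  have "2 * \<alpha> * n^2 \<le> (\<Sum>v\<in>V. d v)"
    using many_edges f1_le_sum_degrees[OF sc] unfolding n_def V_def d_def
    by (simp flip: of_nat_sum)
  then have "\<alpha>^2 * n^3 \<le> (\<Sum>v\<in>{v\<in>V. \<alpha> * n \<le> d v}. d v ^ 2)"
    unfolding n_def using finV \<alpha> by (intro sum_squares_of_large_terms)
  also have "\<dots> \<le> (\<Sum>v\<in>{v\<in>V. \<alpha> * n \<le> d v}. 64 * Q v)"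
  proof (rule sum_mono)
    fix v assume "v \<in> {v\<in>V. \<alpha> * n \<le> d v}"
    then have "2 * cdim K \<le> card (nbhd K v)" using low_dim unfolding d_def n_def V_def by simp
    then show "d v ^ 2 \<le> 64 * Q v"
      unfolding d_def Q_def by (rule large_nbhd_arcs[OF sc fl square])
  qed
  also have "\<dots> \<le> 64 * (\<Sum>v\<in>V. Q v)"
    unfolding sum_distrib_left[symmetric] using finV by (intro mult_left_mono sum_mono2) (auto simp: Q_def)
  also have "\<dots> \<le> 64 * (n^2 * real (cdim K))"
    using sum_nbhd_arcs_le[OF sc fl square] unfolding n_def Q_def V_def
    by (simp flip: of_nat_sum of_nat_mult of_nat_power)
  finally show ?thesis unfolding n_def V_def .
qed

lemma sparse_edge_bound:
  assumes \<epsilon>: "(\<epsilon>'::real) > 0"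
  shows "\<exists>\<delta>'::real. \<delta>' > 0 \<and>
           (\<forall>\<Gamma>::nat set set. simplicial_complex \<Gamma> \<and>
               girth TYPE('k::field) \<Gamma> 1 > enat 4 \<and>
               real (cdim \<Gamma>) < \<delta>' * real (card (verts \<Gamma>)) \<longrightarrow>
               real (f1 \<Gamma>) < \<epsilon>' * real (card (verts \<Gamma>)) ^ 2)"
proof (intro exI conjI allI impI)
  show "min (\<epsilon>'/4) (\<epsilon>'^2/256) > 0" using \<epsilon> by simp
  fix K :: "nat set set"
  assume "simplicial_complex K \<and> girth TYPE('k) K 1 > enat 4 \<and>
    real (cdim K) < min (\<epsilon>'/4) (\<epsilon>'^2/256) * real (card (verts K))"
  then have sc: "simplicial_complex K" and girth: "girth TYPE('k) K 1 > enat 4"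
    and small: "real (cdim K) < min (\<epsilon>'/4) (\<epsilon>'^2/256) * real (card (verts K))" by auto
  define n where "n = real (card (verts K))"
  define w where "w = real (cdim K)"
  have "0 < min (\<epsilon>'/4) (\<epsilon>'^2/256) * n"
    using small unfolding n_def by (meson of_nat_0_le_iff le_less_trans)
  then have n_pos: "n > 0" using \<epsilon> by (auto simp: zero_less_mult_iff min_less_iff_disj)
  have "min (\<epsilon>'/4) (\<epsilon>'^2/256) * n \<le> \<epsilon>' / 4 * n" "min (\<epsilon>'/4) (\<epsilon>'^2/256) * n \<le> \<epsilon>'^2 / 256 * n"
    using n_pos by (simp_all add: mult_right_mono)
  then have w1: "2 * w \<le> \<epsilon>' / 2 * n" and w2: "w < \<epsilon>'^2 / 256 * n"
    using small unfolding w_def n_def by linarith+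
  show "real (f1 K) < \<epsilon>' * real (card (verts K)) ^ 2"
  proof (rule ccontr)
    assume "\<not> ?thesis"
    then have "(\<epsilon>' / 2)^2 * n^3 \<le> 64 * (n^2 * w)"
      using \<epsilon> w1 unfolding n_def w_def
      by (intro many_edges_force_dimension[OF sc girth]) auto
    also have "\<dots> < (\<epsilon>' / 2)^2 * n^3"
      using w2 n_pos by (simp add: power2_eq_square power3_eq_cube field_simps)
    finally show False by simp
  qed
qed

theorem mainTheorem5:
  shows "(\<forall>(p::nat) (\<delta>::real). p \<ge> 1 \<and> \<delta> > 0 \<longrightarrow>
            (\<exists>\<epsilon>::real. \<epsilon> > 0 \<and>
               (\<forall>\<Gamma>::nat set set. simplicial_complex \<Gamma> \<and> flag \<Gamma> \<and>
                   girth TYPE('k::field) \<Gamma> (p - 1) > enat (2 * p) \<and>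
                   real (cdim \<Gamma>) < (1 - \<delta>) * real (card (verts \<Gamma>)) \<longrightarrow>
                   real (f1 \<Gamma>) < real (card (verts \<Gamma>) choose 2) - \<epsilon> * real (card (verts \<Gamma>)) ^ 2)))
       \<and> (\<forall>\<epsilon>'::real. \<epsilon>' > 0 \<longrightarrow>
            (\<exists>\<delta>'::real. \<delta>' > 0 \<and>
               (\<forall>\<Gamma>::nat set set. simplicial_complex \<Gamma> \<and>
                   girth TYPE('k) \<Gamma> 1 > enat 4 \<and>
                   real (cdim \<Gamma>) < \<delta>' * real (card (verts \<Gamma>)) \<longrightarrow>
                   real (f1 \<Gamma>) < \<epsilon>' * real (card (verts \<Gamma>)) ^ 2)))"
  by (intro conjI allI impI flag_edge_bound sparse_edge_bound) auto

end
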